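(* Let $P$ be a distribution on $\mathcal{X}$, $R>0$, $K>0$. Then \[ E_c(P,R,K)=\min\Big\{\sup_{0\le\rho<1}\{E_0(-\rho,0,P)+\rho R\},\ \sup_{0\le\rho<1}\{E_0(-\rho,-\rho,P)+\rho(R+K)\}\Big\}, \] where \[ E_c(P,R,K)=\min_{TV}\Big\{D(TV\|PW)+\big|R-A_{TV}-|B_{TV}-K|^{+}\big|^{+}\Big\},\qquad E_0(\rho,\eta,P)=-\log\sum_y\Big[\sum_x P(x)W^{\frac{1+\eta}{1+\rho}}(y|x)\Big]^{1+\rho}. \]
   Context: $\mathcal{X},\mathcal{Y}$ are finite alphabets and $W(y|x)$ is a conditional distribution on $\mathcal{Y}$ given $\mathcal{X}$. Logs are natural. $TV$ is a joint distribution on $\mathcal{Y}\times\mathcal{X}$ with $\mathcal{Y}$-marginal $T$ and conditional $V(x|y)$, minimized over all such distributions; $PW$ is $P(x)W(y|x)$; $D(TV\|PW)=\sum T(y)V(x|y)\log\frac{T(y)V(x|y)}{P(x)W(y|x)}$; $A_{TV}=\sum T(y)V(x|y)\log\frac{V(x|y)}{P(x)}$; $B_{TV}=\mathbb{E}_{TV}[-\log W(Y|X)]$; $|t|^{+}=\max\{0,t\}$. *)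

theory Defs
  imports Complex_Main
begin

text \<open>Channel W(y|x) is represented as W x y; a joint distribution TV on Y x X as Q y x.\<close>

definition channel :: "('x::finite \<Rightarrow> 'y::finite \<Rightarrow> real) \<Rightarrow> bool" where
  "channel W \<longleftrightarrow> (\<forall>x y. W x y \<ge> 0) \<and> (\<forall>x. (\<Sum>y\<in>UNIV. W x y) = 1)"

definition distr :: "('x::finite \<Rightarrow> real) \<Rightarrow> bool" where
  "distr P \<longleftrightarrow> (\<forall>x. P x \<ge> 0) \<and> (\<Sum>x\<in>UNIV. P x) = 1"

definition joint_distr :: "('y::finite \<Rightarrow> 'x::finite \<Rightarrow> real) \<Rightarrow> bool" where
  "joint_distr Q \<longleftrightarrow> (\<forall>y x. Q y x \<ge> 0) \<and> (\<Sum>y\<in>UNIV. \<Sum>x\<in>UNIV. Q y x) = 1"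

definition marg :: "('y::finite \<Rightarrow> 'x::finite \<Rightarrow> real) \<Rightarrow> 'y \<Rightarrow> real" where
  "marg Q y = (\<Sum>x\<in>UNIV. Q y x)"

definition divD :: "('x::finite \<Rightarrow> 'y::finite \<Rightarrow> real) \<Rightarrow> ('x \<Rightarrow> real) \<Rightarrow> ('y \<Rightarrow> 'x \<Rightarrow> real) \<Rightarrow> real" where
  "divD W P Q = (\<Sum>y\<in>UNIV. \<Sum>x\<in>UNIV. if Q y x = 0 then 0 else Q y x * ln (Q y x / (P x * W x y)))"

text \<open>A_{TV} = sum T(y)V(x|y) log (V(x|y)/P(x)), where V(x|y) = Q y x / T y.\<close>
definition A_TV :: "('x::finite \<Rightarrow> real) \<Rightarrow> ('y::finite \<Rightarrow> 'x \<Rightarrow> real) \<Rightarrow> real" where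
  "A_TV P Q = (\<Sum>y\<in>UNIV. \<Sum>x\<in>UNIV. if Q y x = 0 then 0 else Q y x * ln ((Q y x / marg Q y) / P x))"

definition B_TV :: "('x::finite \<Rightarrow> 'y::finite \<Rightarrow> real) \<Rightarrow> ('y \<Rightarrow> 'x \<Rightarrow> real) \<Rightarrow> real" where
  "B_TV W Q = (\<Sum>y\<in>UNIV. \<Sum>x\<in>UNIV. if Q y x = 0 then 0 else Q y x * (- ln (W x y)))"

definition pos_part :: "real \<Rightarrow> real" where
  "pos_part t = max 0 t"

text \<open>E_c(P,R,K). Joint distributions not absolutely continuous w.r.t. PW give D = +infinity
  and thus never attain the minimum; we minimize over the remaining ones (nonempty: PW itself).\<close>
definition Ec :: "('x::finite \<Rightarrow> 'y::finite \<Rightarrow> real) \<Rightarrow> ('x \<Rightarrow> real) \<Rightarrow> real \<Rightarrow> real \<Rightarrow> real" where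
  "Ec W P R K = (INF Q \<in> {Q. joint_distr Q \<and> (\<forall>y x. Q y x > 0 \<longrightarrow> P x * W x y > 0)}.
      divD W P Q + pos_part (R - A_TV P Q - pos_part (B_TV W Q - K)))"

definition E0 :: "('x::finite \<Rightarrow> 'y::finite \<Rightarrow> real) \<Rightarrow> real \<Rightarrow> real \<Rightarrow> ('x \<Rightarrow> real) \<Rightarrow> real" where
  "E0 W \<rho> \<eta> P = - ln (\<Sum>y\<in>UNIV. (\<Sum>x\<in>UNIV. P x * W x y powr ((1 + \<eta>) / (1 + \<rho>))) powr (1 + \<rho>))"

end

theory Submission
  imports Defs
begin

(*
  Since |R - A - |B - K|^+|^+ = min(|R - A|^+, |R + K - A - B|^+), E_c is the minimum of the two
  problems inf_Q D + |R' - A - kappa B|^+ with (kappa, R') = (0, R) and (1, R + K).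
  For rho < 1 and a (1 - rho) = 1 + eta, the log-sum inequality, applied first along x and then
  along y, gives D - rho A + eta B >= -ln sum_y (sum_x P(x) W(y|x)^a)^(1 - rho) for every
  admissible Q, with equality at an explicit tilted joint distribution. With eta = -kappa rho the
  right-hand side is E_0(-rho, -kappa rho), and rho t <= |t|^+ turns this into weak duality.
  Conversely, along the continuous path of tilted distributions the rate A + kappa B either
  reaches R', and the intermediate value theorem yields a tilted distribution attaining the dual
  value, or stays below R', and then the gap is at most (1 - rho) R', which vanishes as rho -> 1.
*)

lemma log_sum_inequality:
  fixes p q :: "'a \<Rightarrow> real"
  assumes "finite S" and p_nonneg: "\<And>x. x \<in> S \<Longrightarrow> p x \<ge> 0" and q_nonneg: "\<And>x. x \<in> S \<Longrightarrow> q x \<ge> 0"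
    and abs_cont: "\<And>x. x \<in> S \<Longrightarrow> p x > 0 \<Longrightarrow> q x > 0" and "sum p S > 0"
  shows "sum p S * ln (sum p S / sum q S) \<le> (\<Sum>x\<in>S. if p x = 0 then 0 else p x * ln (p x / q x))"
proof -
  define s where "s = sum p S"
  define r where "r = sum q S"
  obtain x0 where "x0 \<in> S" "p x0 \<noteq> 0"
    using \<open>sum p S > 0\<close> sum.not_neutral_contains_not_neutral by force
  then have x0: "x0 \<in> S" "p x0 > 0" using p_nonneg by force+
  have "q x0 \<le> r"
    unfolding r_def by (rule member_le_sum) (use x0 q_nonneg \<open>finite S\<close> in auto)
  then have "r > 0" using abs_cont x0 by force
  have "s > 0" using \<open>sum p S > 0\<close> s_def by simp
  have term_bound: "p x * ln (s / r) + p x - q x * s / r \<le> (if p x = 0 then 0 else p x * ln (p x / q x))"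
    if "x \<in> S" for x
  proof (cases "p x = 0")
    case True
    then show ?thesis using q_nonneg[OF that] \<open>r > 0\<close> \<open>s > 0\<close> by simp
  next
    case False
    then have "p x > 0" "q x > 0" using p_nonneg abs_cont that by force+
    define t where "t = q x * s / (p x * r)"
    have "t > 0" unfolding t_def using \<open>p x > 0\<close> \<open>q x > 0\<close> \<open>s > 0\<close> \<open>r > 0\<close> by simp
    have "ln (s / r) = ln t + ln (p x / q x)"
      unfolding t_def using \<open>p x > 0\<close> \<open>q x > 0\<close> \<open>s > 0\<close> \<open>r > 0\<close> by (simp add: ln_div ln_mult)
    moreover have "p x * ln t \<le> q x * s / r - p x"
      using mult_left_mono[OF ln_le_minus_one[OF \<open>t > 0\<close>], of "p x"] \<open>p x > 0\<close>
      unfolding t_def by (simp add: field_simps)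
    ultimately show ?thesis using False by (simp add: algebra_simps)
  qed
  have "s * ln (s / r) = (\<Sum>x\<in>S. p x * ln (s / r) + p x - q x * s / r)"
    using \<open>r > 0\<close> by (simp add: sum.distrib sum_subtractf s_def r_def
        sum_distrib_right[symmetric] sum_divide_distrib[symmetric])
  also have "\<dots> \<le> (\<Sum>x\<in>S. if p x = 0 then 0 else p x * ln (p x / q x))"
    by (rule sum_mono) (rule term_bound)
  finally show ?thesis unfolding s_def r_def .
qed

lemma pos_part_diff_pos_part:
  "pos_part (R - A - pos_part (B - K)) = min (max 0 (R - A)) (max 0 (R + K - (A + B)))"
  unfolding pos_part_def by (auto simp: max_def min_def)

lemma mult_le_max_zero:
  fixes \<rho> t :: real
  assumes "0 \<le> \<rho>" "\<rho> \<le> 1"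
  shows "\<rho> * t \<le> max 0 t"
  using assms mult_left_le_one_le[of t \<rho>] mult_nonneg_nonpos[of \<rho> t] by (cases "t \<ge> 0") auto

lemma exists_penalized_le_SUP:
  fixes G J D :: "real \<Rightarrow> real"
  assumes J_cont: "continuous_on {0..<1} J"
    and J_nonneg: "\<And>\<rho>. \<rho> \<in> {0..<1} \<Longrightarrow> J \<rho> \<ge> 0"
    and G_bdd: "bdd_above (G ` {0..<1})"
    and D_eq: "\<And>\<rho>. \<rho> \<in> {0..<1} \<Longrightarrow> D \<rho> = G \<rho> - \<rho> * (R - J \<rho>)"
    and "R > 0" and "\<epsilon> > 0"
  shows "\<exists>\<rho>\<in>{0..<1}. D \<rho> + max 0 (R - J \<rho>) \<le> (SUP \<rho>\<in>{0..<1}. G \<rho>) + \<epsilon>"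
proof -
  define S where "S = (SUP \<rho>\<in>{0..<1}. G \<rho>)"
  have G_le: "G \<rho> \<le> S" if "\<rho> \<in> {0..<1}" for \<rho>
    unfolding S_def using that G_bdd by (rule cSUP_upper)
  show ?thesis
  proof (cases "\<exists>\<rho>\<in>{0..<1}. R \<le> J \<rho>")
    case True
    then obtain \<rho>\<^sub>1 where \<rho>\<^sub>1: "\<rho>\<^sub>1 \<in> {0..<1}" "R \<le> J \<rho>\<^sub>1" by blast
    have "\<exists>\<rho>\<in>{0..<1}. R \<le> J \<rho> \<and> (\<rho> = 0 \<or> J \<rho> = R)"
    proof (cases "R \<le> J 0")
      case False
      have "continuous_on {0..\<rho>\<^sub>1} J"
        using J_cont by (rule continuous_on_subset) (use \<rho>\<^sub>1 in auto)
      then obtain \<rho> where "0 \<le> \<rho>" "\<rho> \<le> \<rho>\<^sub>1" "J \<rho> = R"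
        using IVT'[of J 0 R \<rho>\<^sub>1] False \<rho>\<^sub>1 by auto
      then show ?thesis using \<rho>\<^sub>1 by auto
    qed auto
    then obtain \<rho> where \<rho>: "\<rho> \<in> {0..<1}" "R \<le> J \<rho>" "\<rho> = 0 \<or> J \<rho> = R" by blast
    then have "D \<rho> + max 0 (R - J \<rho>) = G \<rho>" using D_eq[OF \<rho>(1)] by auto
    then show ?thesis using G_le[OF \<rho>(1)] \<open>\<epsilon> > 0\<close> \<rho>(1) unfolding S_def by force
  next
    case False
    define \<rho> where "\<rho> = max 0 (1 - \<epsilon> / R)"
    have \<rho>: "\<rho> \<in> {0..<1}" unfolding \<rho>_def using \<open>\<epsilon> > 0\<close> \<open>R > 0\<close> by auto
    have "(1 - \<rho>) * R \<le> \<epsilon>"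
      unfolding \<rho>_def using \<open>R > 0\<close> \<open>\<epsilon> > 0\<close> by (auto simp: max_def field_simps)
    have "J \<rho> < R" using False \<rho> not_le by blast
    then have "D \<rho> + max 0 (R - J \<rho>) = G \<rho> + (1 - \<rho>) * (R - J \<rho>)"
      using D_eq[OF \<rho>] by (simp add: algebra_simps)
    also have "\<dots> \<le> S + (1 - \<rho>) * R"
      using G_le[OF \<rho>] \<rho> mult_left_le_one_le[OF J_nonneg[OF \<rho>], of \<rho>]
      by (simp add: algebra_simps)
    also have "\<dots> \<le> S + \<epsilon>" using \<open>(1 - \<rho>) * R \<le> \<epsilon>\<close> by simp
    finally show ?thesis using \<rho> unfolding S_def by blast
  qed
qed

lemma B_TV_eq_sum: "B_TV W Q = (\<Sum>y\<in>UNIV. \<Sum>x\<in>UNIV. Q y x * - ln (W x y))"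
  unfolding B_TV_def by (intro sum.cong refl) simp

lemma continuous_on_A_TV:
  fixes Q :: "'a::topological_space \<Rightarrow> 'y::finite \<Rightarrow> 'x::finite \<Rightarrow> real"
  assumes cont: "\<And>y x. continuous_on S (\<lambda>r. Q r y x)"
    and nonneg: "\<And>r y x. r \<in> S \<Longrightarrow> Q r y x \<ge> 0"
    and support: "\<And>r y x. r \<in> S \<Longrightarrow> Q r y x > 0 \<longleftrightarrow> Z y x"
    and P_pos: "\<And>y x. Z y x \<Longrightarrow> P x > 0"
  shows "continuous_on S (\<lambda>r. A_TV P (Q r))"
proof -
  have A_eq: "A_TV P (Q r) = (\<Sum>y\<in>UNIV. \<Sum>x\<in>UNIV.
      if Z y x then Q r y x * ln (Q r y x / marg (Q r) y / P x) else 0)" if "r \<in> S" for r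
  proof -
    have "Q r y x = 0 \<longleftrightarrow> \<not> Z y x" for y x
      using nonneg[OF that, of y x] support[OF that, of y x] by (metis less_le)
    then show ?thesis unfolding A_TV_def by (intro sum.cong refl) auto
  qed
  have "continuous_on S (\<lambda>r. if Z y x then Q r y x * ln (Q r y x / marg (Q r) y / P x) else 0)"
    for y x
  proof (cases "Z y x")
    case True
    have "Q r y x \<noteq> 0" "marg (Q r) y \<noteq> 0" if "r \<in> S" for r
    proof -
      have "Q r y x > 0" using support[OF that] True by simp
      moreover have "Q r y x \<le> marg (Q r) y"
        unfolding marg_def by (rule member_le_sum) (use nonneg[OF that] in auto)
      ultimately show "Q r y x \<noteq> 0" "marg (Q r) y \<noteq> 0" by linarith+
    qed
    moreover have "continuous_on S (\<lambda>r. marg (Q r) y)"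
      unfolding marg_def by (intro continuous_intros cont)
    ultimately show ?thesis
      using True P_pos[OF True] by (auto intro!: continuous_intros cont)
  qed simp
  then have "continuous_on S (\<lambda>r. \<Sum>y\<in>UNIV. \<Sum>x\<in>UNIV.
      if Z y x then Q r y x * ln (Q r y x / marg (Q r) y / P x) else 0)"
    by (intro continuous_on_sum)
  moreover have "continuous_on S (\<lambda>r. A_TV P (Q r)) \<longleftrightarrow> continuous_on S (\<lambda>r. \<Sum>y\<in>UNIV. \<Sum>x\<in>UNIV.
      if Z y x then Q r y x * ln (Q r y x / marg (Q r) y / P x) else 0)"
    by (rule continuous_on_cong) (simp_all add: A_eq)
  ultimately show ?thesis by simp
qed

definition admissible ::
    "('x::finite \<Rightarrow> 'y::finite \<Rightarrow> real) \<Rightarrow> ('x \<Rightarrow> real) \<Rightarrow> ('y \<Rightarrow> 'x \<Rightarrow> real) \<Rightarrow> bool" where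
  "admissible W P Q \<longleftrightarrow> joint_distr Q \<and> (\<forall>y x. Q y x > 0 \<longrightarrow> P x * W x y > 0)"

definition tilt_weight ::
    "('x::finite \<Rightarrow> 'y::finite \<Rightarrow> real) \<Rightarrow> ('x \<Rightarrow> real) \<Rightarrow> real \<Rightarrow> 'x \<Rightarrow> 'y \<Rightarrow> real" where
  "tilt_weight W P a x y = P x * W x y powr a"

definition tilt_output ::
    "('x::finite \<Rightarrow> 'y::finite \<Rightarrow> real) \<Rightarrow> ('x \<Rightarrow> real) \<Rightarrow> real \<Rightarrow> 'y \<Rightarrow> real" where
  "tilt_output W P a y = (\<Sum>x\<in>UNIV. tilt_weight W P a x y)"

definition gallager_sum ::
    "('x::finite \<Rightarrow> 'y::finite \<Rightarrow> real) \<Rightarrow> ('x \<Rightarrow> real) \<Rightarrow> real \<Rightarrow> real \<Rightarrow> real" where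
  "gallager_sum W P a c = (\<Sum>y\<in>UNIV. tilt_output W P a y powr c)"

definition tilted ::
    "('x::finite \<Rightarrow> 'y::finite \<Rightarrow> real) \<Rightarrow> ('x \<Rightarrow> real) \<Rightarrow> real \<Rightarrow> real \<Rightarrow> 'y \<Rightarrow> 'x \<Rightarrow> real" where
  "tilted W P a c y x =
     tilt_output W P a y powr c / gallager_sum W P a c * (tilt_weight W P a x y / tilt_output W P a y)"

definition tilted_path ::
    "('x::finite \<Rightarrow> 'y::finite \<Rightarrow> real) \<Rightarrow> ('x \<Rightarrow> real) \<Rightarrow> real \<Rightarrow> real \<Rightarrow> 'y \<Rightarrow> 'x \<Rightarrow> real" where
  "tilted_path W P \<kappa> \<rho> = tilted W P ((1 - \<kappa> * \<rho>) / (1 - \<rho>)) (1 - \<rho>)"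

definition lagrangian ::
    "('x::finite \<Rightarrow> 'y::finite \<Rightarrow> real) \<Rightarrow> ('x \<Rightarrow> real) \<Rightarrow> real \<Rightarrow> real \<Rightarrow> ('y \<Rightarrow> 'x \<Rightarrow> real) \<Rightarrow> real" where
  "lagrangian W P \<rho> \<eta> Q = divD W P Q - \<rho> * A_TV P Q + \<eta> * B_TV W Q"

lemma E0_eq_neg_ln_gallager_sum:
  "E0 W (-\<rho>) (-(\<kappa> * \<rho>)) P = - ln (gallager_sum W P ((1 - \<kappa> * \<rho>) / (1 - \<rho>)) (1 - \<rho>))"
  unfolding E0_def gallager_sum_def tilt_output_def tilt_weight_def by simp

context
  fixes W :: "'x::finite \<Rightarrow> 'y::finite \<Rightarrow> real" and P :: "'x \<Rightarrow> real"
  assumes W: "channel W" and P: "distr P"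
begin

lemma W_nonneg: "W x y \<ge> 0"
  using W unfolding channel_def by auto

lemma P_nonneg: "P x \<ge> 0"
  using P unfolding distr_def by auto

lemma W_le_1: "W x y \<le> 1"
proof -
  have "W x y \<le> (\<Sum>y\<in>UNIV. W x y)" by (rule member_le_sum) (auto simp: W_nonneg)
  then show ?thesis using W unfolding channel_def by auto
qed

lemma PW_pos_iff: "P x * W x y > 0 \<longleftrightarrow> P x > 0 \<and> W x y > 0"
  using P_nonneg[of x] W_nonneg[of x y] by (auto simp: zero_less_mult_iff)

lemma exists_PW_pos: "\<exists>x y. P x * W x y > 0"
proof -
  have "sum P UNIV \<noteq> 0" using P unfolding distr_def by simp
  then obtain x where x: "P x \<noteq> 0" by (rule sum.not_neutral_contains_not_neutral)
  have "sum (W x) UNIV \<noteq> 0" using W unfolding channel_def by simp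
  then obtain y where "W x y \<noteq> 0" by (rule sum.not_neutral_contains_not_neutral)
  then have "P x > 0" "W x y > 0" using x P_nonneg[of x] W_nonneg[of x y] by (simp_all add: less_le)
  then show ?thesis using PW_pos_iff by blast
qed

lemma tilt_weight_nonneg: "tilt_weight W P a x y \<ge> 0"
  unfolding tilt_weight_def using P_nonneg by simp

lemma tilt_weight_pos_iff: "tilt_weight W P a x y > 0 \<longleftrightarrow> P x * W x y > 0"
  unfolding tilt_weight_def PW_pos_iff using P_nonneg[of x] W_nonneg[of x y]
  by (auto simp: zero_less_mult_iff)

lemma tilt_output_nonneg: "tilt_output W P a y \<ge> 0"
  unfolding tilt_output_def by (simp add: sum_nonneg tilt_weight_nonneg)

lemma tilt_weight_le_tilt_output: "tilt_weight W P a x y \<le> tilt_output W P a y"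
  unfolding tilt_output_def by (rule member_le_sum) (auto simp: tilt_weight_nonneg)

lemma tilt_output_pos: "P x * W x y > 0 \<Longrightarrow> tilt_output W P a y > 0"
  using tilt_weight_pos_iff tilt_weight_le_tilt_output by (meson less_le_trans)

lemma gallager_sum_pos: "gallager_sum W P a c > 0"
proof -
  obtain x y where "P x * W x y > 0" using exists_PW_pos by blast
  then have "tilt_output W P a y > 0" by (rule tilt_output_pos)
  then have "0 < tilt_output W P a y powr c" by simp
  also have "\<dots> \<le> gallager_sum W P a c"
    unfolding gallager_sum_def by (rule member_le_sum) auto
  finally show ?thesis .
qed

lemma admissible_nonneg: "admissible W P Q \<Longrightarrow> Q y x \<ge> 0"
  unfolding admissible_def joint_distr_def by auto

lemma admissible_pos:
  assumes "admissible W P Q" and "Q y x \<noteq> 0"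
  shows "Q y x > 0" and "P x > 0" and "W x y > 0"
proof -
  show "Q y x > 0" using assms admissible_nonneg[OF assms(1)] by (simp add: less_le)
  then have "P x * W x y > 0" using assms(1) unfolding admissible_def by auto
  then show "P x > 0" "W x y > 0" using PW_pos_iff by auto
qed

lemma admissible_le_marg: "admissible W P Q \<Longrightarrow> Q y x \<le> marg Q y"
  unfolding marg_def by (rule member_le_sum) (auto simp: admissible_nonneg)

lemma admissible_marg_eq_0: "admissible W P Q \<Longrightarrow> marg Q y = 0 \<Longrightarrow> Q y x = 0"
  using admissible_le_marg admissible_nonneg by (metis order.antisym)

lemma admissible_sum_marg: "admissible W P Q \<Longrightarrow> (\<Sum>y\<in>UNIV. marg Q y) = 1"
  unfolding admissible_def joint_distr_def marg_def by auto

lemma admissible_marg_pos: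
  assumes "admissible W P Q" and "marg Q y \<noteq> 0"
  shows "marg Q y > 0" and "tilt_output W P a y > 0"
proof -
  obtain x where "Q y x \<noteq> 0"
    using assms(2) unfolding marg_def by (rule sum.not_neutral_contains_not_neutral)
  then have "Q y x > 0" "P x > 0" "W x y > 0" using admissible_pos[OF assms(1)] by auto
  then show "marg Q y > 0" "tilt_output W P a y > 0"
    using admissible_le_marg[OF assms(1), of y x] tilt_output_pos[of x y] by auto
qed

lemma A_TV_nonneg:
  assumes Q: "admissible W P Q"
  shows "A_TV P Q \<ge> 0"
  unfolding A_TV_def
proof (rule sum_nonneg)
  fix y
  show "0 \<le> (\<Sum>x\<in>UNIV. if Q y x = 0 then 0 else Q y x * ln (Q y x / marg Q y / P x))"
  proof (cases "marg Q y = 0")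
    case False
    have "marg Q y > 0" using admissible_marg_pos[OF Q False] by simp
    have "(\<Sum>x\<in>UNIV. marg Q y * P x) = marg Q y"
      using P unfolding distr_def by (simp add: sum_distrib_left[symmetric])
    then have "0 \<le> (\<Sum>x\<in>UNIV. if Q y x = 0 then 0 else Q y x * ln (Q y x / (marg Q y * P x)))"
      using log_sum_inequality[of UNIV "Q y" "\<lambda>x. marg Q y * P x"] \<open>marg Q y > 0\<close>
        admissible_nonneg[OF Q] admissible_pos[OF Q] P_nonneg
      unfolding marg_def by (auto simp: less_le)
    then show ?thesis by (simp only: divide_divide_eq_left)
  qed (simp add: admissible_marg_eq_0[OF Q])
qed

lemma B_TV_nonneg:
  assumes Q: "admissible W P Q"
  shows "B_TV W Q \<ge> 0"
  unfolding B_TV_def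
proof (intro sum_nonneg)
  fix y x
  show "0 \<le> (if Q y x = 0 then 0 else Q y x * - ln (W x y))"
    using admissible_pos[OF Q, of y x] W_le_1[of x y] by (auto intro!: mult_nonneg_nonpos)
qed

lemma lagrangian_eq_sum:
  assumes Q: "admissible W P Q" and a: "a * (1 - \<rho>) = 1 + \<eta>"
  shows "lagrangian W P \<rho> \<eta> Q = (\<Sum>y\<in>UNIV. \<Sum>x\<in>UNIV. if Q y x = 0 then 0 else
    Q y x * (ln (marg Q y) + (1 - \<rho>) * ln (Q y x / marg Q y / tilt_weight W P a x y)))"
proof -
  have term_eq: "(if Q y x = 0 then 0 else Q y x * ln (Q y x / (P x * W x y)))
      - \<rho> * (if Q y x = 0 then 0 else Q y x * ln (Q y x / marg Q y / P x))
      + \<eta> * (if Q y x = 0 then 0 else Q y x * - ln (W x y))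
    = (if Q y x = 0 then 0 else
        Q y x * (ln (marg Q y) + (1 - \<rho>) * ln (Q y x / marg Q y / tilt_weight W P a x y)))"
    for y x
  proof (cases "Q y x = 0")
    case False
    then have "Q y x > 0" "P x > 0" "W x y > 0" using admissible_pos[OF Q] by auto
    moreover have "marg Q y > 0" using calculation(1) admissible_le_marg[OF Q, of y x] by linarith
    moreover have \<eta>: "\<eta> = a * (1 - \<rho>) - 1" using a by simp
    ultimately show ?thesis
      using False unfolding tilt_weight_def
      by (simp add: \<eta> ln_div ln_mult ln_powr algebra_simps)
  qed simp
  have "lagrangian W P \<rho> \<eta> Q = (\<Sum>y\<in>UNIV. \<Sum>x\<in>UNIV.
      (if Q y x = 0 then 0 else Q y x * ln (Q y x / (P x * W x y)))
      - \<rho> * (if Q y x = 0 then 0 else Q y x * ln (Q y x / marg Q y / P x))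
      + \<eta> * (if Q y x = 0 then 0 else Q y x * - ln (W x y)))"
    unfolding lagrangian_def divD_def A_TV_def B_TV_def
    by (simp add: sum.distrib sum_subtractf sum_distrib_left)
  then show ?thesis unfolding term_eq .
qed

lemma row_log_sum_bound:
  assumes Q: "admissible W P Q" and "c > 0"
  shows "(if marg Q y = 0 then 0 else marg Q y * ln (marg Q y / tilt_output W P a y powr c))
    \<le> (\<Sum>x\<in>UNIV. if Q y x = 0 then 0 else
          Q y x * (ln (marg Q y) + c * ln (Q y x / marg Q y / tilt_weight W P a x y)))"
proof (cases "marg Q y = 0")
  case False
  define T where "T = marg Q y"
  define g where "g = tilt_output W P a y"
  have "T > 0" "g > 0" using admissible_marg_pos[OF Q False] unfolding T_def g_def by auto
  have "T * ln (T / (T * g))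
      \<le> (\<Sum>x\<in>UNIV. if Q y x = 0 then 0 else Q y x * ln (Q y x / (T * tilt_weight W P a x y)))"
    using log_sum_inequality[of UNIV "Q y" "\<lambda>x. T * tilt_weight W P a x y"] \<open>T > 0\<close>
      admissible_nonneg[OF Q] admissible_pos[OF Q] tilt_weight_nonneg tilt_weight_pos_iff
    unfolding T_def g_def marg_def tilt_output_def sum_distrib_left[symmetric]
    by (auto simp: less_le)
  moreover have "T * ln (T / (T * g)) = - (T * ln g)" using \<open>T > 0\<close> \<open>g > 0\<close> by (simp add: ln_div)
  ultimately have log_sum: "- (T * ln g)
      \<le> (\<Sum>x\<in>UNIV. if Q y x = 0 then 0 else Q y x * ln (Q y x / (T * tilt_weight W P a x y)))"
    by simp
  have "T * ln (T / g powr c) = T * ln T + c * - (T * ln g)"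
    using \<open>T > 0\<close> \<open>g > 0\<close> by (simp add: ln_div ln_powr algebra_simps)
  also have "\<dots> \<le> T * ln T + c * (\<Sum>x\<in>UNIV. if Q y x = 0 then 0 else
      Q y x * ln (Q y x / (T * tilt_weight W P a x y)))"
    using mult_left_mono[OF log_sum, of c] \<open>c > 0\<close> by simp
  also have "\<dots> = (\<Sum>x\<in>UNIV. Q y x * ln T) + (\<Sum>x\<in>UNIV. c * (if Q y x = 0 then 0 else
      Q y x * ln (Q y x / (T * tilt_weight W P a x y))))"
    unfolding sum_distrib_right[symmetric] sum_distrib_left[symmetric] T_def marg_def ..
  also have "\<dots> = (\<Sum>x\<in>UNIV. if Q y x = 0 then 0 else
      Q y x * (ln T + c * ln (Q y x / T / tilt_weight W P a x y)))"
    unfolding sum.distrib[symmetric] by (intro sum.cong refl) (simp add: algebra_simps)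
  finally show ?thesis using False unfolding T_def g_def by simp
qed (simp add: admissible_marg_eq_0[OF Q])

lemma neg_ln_gallager_sum_le_lagrangian:
  assumes Q: "admissible W P Q" and a: "a * (1 - \<rho>) = 1 + \<eta>" and "\<rho> < 1"
  shows "- ln (gallager_sum W P a (1 - \<rho>)) \<le> lagrangian W P \<rho> \<eta> Q"
proof -
  let ?T = "marg Q" and ?g = "\<lambda>y. tilt_output W P a y powr (1 - \<rho>)"
  have "- ln (gallager_sum W P a (1 - \<rho>)) = sum ?T UNIV * ln (sum ?T UNIV / sum ?g UNIV)"
    using admissible_sum_marg[OF Q] by (simp add: gallager_sum_def ln_div)
  also have "\<dots> \<le> (\<Sum>y\<in>UNIV. if ?T y = 0 then 0 else ?T y * ln (?T y / ?g y))"
  proof (rule log_sum_inequality)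
    show "?T y \<ge> 0" for y
      using admissible_nonneg[OF Q, of y] admissible_le_marg[OF Q, of y] by (meson order_trans)
    show "?g y > 0" if "?T y > 0" for y
      using admissible_marg_pos(2)[OF Q, of y a] that by simp
  qed (use admissible_sum_marg[OF Q] in auto)
  also have "\<dots> \<le> (\<Sum>y\<in>UNIV. \<Sum>x\<in>UNIV. if Q y x = 0 then 0 else
      Q y x * (ln (?T y) + (1 - \<rho>) * ln (Q y x / ?T y / tilt_weight W P a x y)))"
    using row_log_sum_bound[OF Q] \<open>\<rho> < 1\<close> by (intro sum_mono) simp
  also have "\<dots> = lagrangian W P \<rho> \<eta> Q"
    by (rule lagrangian_eq_sum[OF Q a, symmetric])
  finally show ?thesis .
qed

lemma tilted_nonneg: "tilted W P a c y x \<ge> 0"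
  unfolding tilted_def
  using gallager_sum_pos[of a c] tilt_output_nonneg[of a y] tilt_weight_nonneg[of a x y]
  by (intro mult_nonneg_nonneg divide_nonneg_nonneg) auto

lemma tilted_pos_iff: "tilted W P a c y x > 0 \<longleftrightarrow> P x * W x y > 0"
proof
  assume "tilted W P a c y x > 0"
  then have "tilt_weight W P a x y \<noteq> 0" unfolding tilted_def by auto
  then show "P x * W x y > 0" using tilt_weight_pos_iff tilt_weight_nonneg by (simp add: less_le)
next
  assume PW: "P x * W x y > 0"
  show "tilted W P a c y x > 0"
    unfolding tilted_def
    using tilt_output_pos[OF PW, of a] tilt_weight_pos_iff[THEN iffD2, OF PW, of a]
      gallager_sum_pos[of a c]
    by (intro mult_pos_pos divide_pos_pos) simp_all
qed

lemma marg_tilted: "marg (tilted W P a c) y = tilt_output W P a y powr c / gallager_sum W P a c"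
proof (cases "tilt_output W P a y = 0")
  case False
  then show ?thesis
    unfolding marg_def tilted_def
    by (simp add: sum_distrib_left[symmetric] sum_divide_distrib[symmetric] tilt_output_def)
qed (simp add: marg_def tilted_def)

lemma admissible_tilted: "admissible W P (tilted W P a c)"
proof -
  have "(\<Sum>y\<in>UNIV. \<Sum>x\<in>UNIV. tilted W P a c y x) = (\<Sum>y\<in>UNIV. marg (tilted W P a c) y)"
    unfolding marg_def ..
  also have "\<dots> = 1"
    using gallager_sum_pos[of a c]
    unfolding marg_tilted sum_divide_distrib[symmetric] gallager_sum_def by simp
  finally show ?thesis
    unfolding admissible_def joint_distr_def using tilted_nonneg tilted_pos_iff by auto
qed

lemma lagrangian_tilted:
  assumes a: "a * (1 - \<rho>) = 1 + \<eta>"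
  shows "lagrangian W P \<rho> \<eta> (tilted W P a (1 - \<rho>)) = - ln (gallager_sum W P a (1 - \<rho>))"
proof -
  let ?Q = "tilted W P a (1 - \<rho>)" and ?Z = "gallager_sum W P a (1 - \<rho>)"
  have "ln (marg ?Q y) + (1 - \<rho>) * ln (?Q y x / marg ?Q y / tilt_weight W P a x y) = - ln ?Z"
    if "?Q y x \<noteq> 0" for y x
  proof -
    have "P x * W x y > 0" using that tilted_pos_iff tilted_nonneg by (simp add: less_le)
    then have "tilt_output W P a y > 0" "tilt_weight W P a x y > 0" "?Z > 0"
      using tilt_output_pos tilt_weight_pos_iff gallager_sum_pos by auto
    then show ?thesis
      unfolding marg_tilted by (simp add: tilted_def ln_div ln_powr field_simps)
  qed
  then have "lagrangian W P \<rho> \<eta> ?Q = (\<Sum>y\<in>UNIV. \<Sum>x\<in>UNIV. ?Q y x * - ln ?Z)"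
    unfolding lagrangian_eq_sum[OF admissible_tilted a] by (intro sum.cong refl) auto
  also have "\<dots> = (\<Sum>y\<in>UNIV. \<Sum>x\<in>UNIV. ?Q y x) * - ln ?Z"
    by (simp only: sum_distrib_right)
  also have "\<dots> = - ln ?Z"
    using admissible_tilted[of a "1 - \<rho>"] unfolding admissible_def joint_distr_def by simp
  finally show ?thesis .
qed

lemma lagrangian_tilted_path:
  assumes "\<rho> < 1"
  shows "lagrangian W P \<rho> (-(\<kappa> * \<rho>)) (tilted_path W P \<kappa> \<rho>) = E0 W (-\<rho>) (-(\<kappa> * \<rho>)) P"
  unfolding tilted_path_def E0_eq_neg_ln_gallager_sum
  by (rule lagrangian_tilted) (use assms in simp)

lemma E0_le_lagrangian:
  assumes "admissible W P Q" and "\<rho> < 1"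
  shows "E0 W (-\<rho>) (-(\<kappa> * \<rho>)) P \<le> lagrangian W P \<rho> (-(\<kappa> * \<rho>)) Q"
  unfolding E0_eq_neg_ln_gallager_sum
  by (rule neg_ln_gallager_sum_le_lagrangian) (use assms in simp_all)

lemma weak_duality:
  assumes "admissible W P Q" and "0 \<le> \<rho>" "\<rho> < 1"
  shows "E0 W (-\<rho>) (-(\<kappa> * \<rho>)) P + \<rho> * R \<le> divD W P Q + max 0 (R - (A_TV P Q + \<kappa> * B_TV W Q))"
  using E0_le_lagrangian[OF assms(1,3), of \<kappa>]
    mult_le_max_zero[of \<rho> "R - (A_TV P Q + \<kappa> * B_TV W Q)"] assms(2,3)
  unfolding lagrangian_def by (simp add: algebra_simps)

lemma continuous_on_tilt_output:
  assumes "continuous_on S a" "\<And>r. r \<in> S \<Longrightarrow> a r > 0"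
  shows "continuous_on S (\<lambda>r. tilt_output W P (a r) y)"
  unfolding tilt_output_def tilt_weight_def
  by (intro continuous_intros continuous_on_powr') (use assms W_nonneg in auto)

lemma continuous_on_gallager_sum:
  assumes "continuous_on S a" "\<And>r. r \<in> S \<Longrightarrow> a r > 0"
    and "continuous_on S c" "\<And>r. r \<in> S \<Longrightarrow> c r > 0"
  shows "continuous_on S (\<lambda>r. gallager_sum W P (a r) (c r))"
  unfolding gallager_sum_def
  by (intro continuous_intros continuous_on_powr' continuous_on_tilt_output)
    (use assms tilt_output_nonneg in auto)

lemma continuous_on_tilted:
  assumes "continuous_on S a" "\<And>r. r \<in> S \<Longrightarrow> a r > 0"
    and "continuous_on S c" "\<And>r. r \<in> S \<Longrightarrow> c r > 0"
  shows "continuous_on S (\<lambda>r. tilted W P (a r) (c r) y x)"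
proof (cases "P x * W x y > 0")
  case True
  then have "W x y > 0" "\<And>a. tilt_output W P a y \<noteq> 0" "\<And>a c. gallager_sum W P a c \<noteq> 0"
    using PW_pos_iff tilt_output_pos gallager_sum_pos by (auto simp: less_le)
  then show ?thesis
    unfolding tilted_def tilt_weight_def
    by (intro continuous_intros continuous_on_powr' continuous_on_tilt_output
        continuous_on_gallager_sum) (use assms in auto)
next
  case False
  then have "tilted W P (a r) (c r) y x = 0" for r
    using tilted_pos_iff tilted_nonneg by (metis less_eq_real_def)
  then show ?thesis by simp
qed

lemma continuous_on_rate_tilted_path:
  assumes "\<kappa> \<le> 1"
  shows "continuous_on {0..<1}
    (\<lambda>\<rho>. A_TV P (tilted_path W P \<kappa> \<rho>) + \<kappa> * B_TV W (tilted_path W P \<kappa> \<rho>))"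
proof -
  have a_pos: "(1 - \<kappa> * \<rho>) / (1 - \<rho>) > 0" if "\<rho> \<in> {0..<1}" for \<rho>
    using that mult_right_mono[OF assms, of \<rho>] by (auto intro!: divide_pos_pos)
  have entries: "continuous_on {0..<1} (\<lambda>\<rho>. tilted_path W P \<kappa> \<rho> y x)" for y x
    unfolding tilted_path_def
    by (rule continuous_on_tilted) (auto intro!: continuous_intros a_pos)
  show ?thesis
    unfolding B_TV_eq_sum
    by (intro continuous_intros entries continuous_on_A_TV[where Z = "\<lambda>y x. P x * W x y > 0"])
      (simp_all add: tilted_path_def tilted_nonneg tilted_pos_iff PW_pos_iff)
qed

lemma exists_admissible_near_SUP:
  assumes "0 \<le> \<kappa>" "\<kappa> \<le> 1" and "R > 0" and "\<epsilon> > 0"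
  shows "\<exists>Q. admissible W P Q \<and> divD W P Q + max 0 (R - (A_TV P Q + \<kappa> * B_TV W Q))
    \<le> (SUP \<rho>\<in>{0..<1}. E0 W (-\<rho>) (-(\<kappa> * \<rho>)) P + \<rho> * R) + \<epsilon>"
proof -
  let ?Q = "tilted_path W P \<kappa>"
  let ?J = "\<lambda>\<rho>. A_TV P (?Q \<rho>) + \<kappa> * B_TV W (?Q \<rho>)"
  have "\<exists>\<rho>\<in>{0..<1}. divD W P (?Q \<rho>) + max 0 (R - ?J \<rho>)
      \<le> (SUP \<rho>\<in>{0..<1}. E0 W (-\<rho>) (-(\<kappa> * \<rho>)) P + \<rho> * R) + \<epsilon>"
  proof (rule exists_penalized_le_SUP)
    show "continuous_on {0..<1} ?J" using assms(2) by (rule continuous_on_rate_tilted_path)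
    show "?J \<rho> \<ge> 0" for \<rho>
      using A_TV_nonneg B_TV_nonneg admissible_tilted assms(1)
      unfolding tilted_path_def by simp
    show "bdd_above ((\<lambda>\<rho>. E0 W (-\<rho>) (-(\<kappa> * \<rho>)) P + \<rho> * R) ` {0..<1})"
      using weak_duality[OF admissible_tilted[of 1 1]] by (intro bdd_aboveI2) auto
    show "divD W P (?Q \<rho>) = E0 W (-\<rho>) (-(\<kappa> * \<rho>)) P + \<rho> * R - \<rho> * (R - ?J \<rho>)"
      if "\<rho> \<in> {0..<1}" for \<rho>
      using lagrangian_tilted_path[of \<rho> \<kappa>] that
      unfolding lagrangian_def by (simp add: algebra_simps)
  qed (use assms in auto)
  then show ?thesis using admissible_tilted unfolding tilted_path_def by blast
qed

lemma bdd_below_objective: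
  "bdd_below ((\<lambda>Q. divD W P Q + max 0 (R - (A_TV P Q + \<kappa> * B_TV W Q))) ` {Q. admissible W P Q})"
  using weak_duality[of _ 0] by (intro bdd_belowI2) auto

lemma INF_objective_eq_SUP_E0:
  assumes "0 \<le> \<kappa>" "\<kappa> \<le> 1" and "R > 0"
  shows "(INF Q\<in>{Q. admissible W P Q}. divD W P Q + max 0 (R - (A_TV P Q + \<kappa> * B_TV W Q)))
    = (SUP \<rho>\<in>{0..<1}. E0 W (-\<rho>) (-(\<kappa> * \<rho>)) P + \<rho> * R)" (is "?inf = ?sup")
proof (rule antisym)
  show "?inf \<le> ?sup"
  proof (rule field_le_epsilon)
    fix \<epsilon> :: real assume "\<epsilon> > 0"
    then obtain Q where "admissible W P Q"
      and "divD W P Q + max 0 (R - (A_TV P Q + \<kappa> * B_TV W Q)) \<le> ?sup + \<epsilon>"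
      using exists_admissible_near_SUP assms by blast
    then show "?inf \<le> ?sup + \<epsilon>"
      by (intro cINF_lower2[OF bdd_below_objective]) auto
  qed
  show "?sup \<le> ?inf"
    using admissible_tilted weak_duality by (auto intro!: cINF_greatest cSUP_least)
qed

end

theorem lemma9:
  fixes W :: "'x::finite \<Rightarrow> 'y::finite \<Rightarrow> real" and P :: "'x \<Rightarrow> real" and R K :: real
  assumes "channel W" and "distr P" and "R > 0" and "K > 0"
  shows "Ec W P R K =
    min (SUP \<rho>\<in>{0..<1}. E0 W (-\<rho>) 0 P + \<rho> * R)
        (SUP \<rho>\<in>{0..<1}. E0 W (-\<rho>) (-\<rho>) P + \<rho> * (R + K))"
proof -
  let ?M = "{Q. admissible W P Q}"
  let ?f = "\<lambda>\<kappa> R' Q. divD W P Q + max 0 (R' - (A_TV P Q + \<kappa> * B_TV W Q))"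
  have "Ec W P R K = (INF Q\<in>?M. min (?f 0 R Q) (?f 1 (R + K) Q))"
    unfolding Ec_def admissible_def pos_part_diff_pos_part min_add_distrib_right by simp
  also have "\<dots> = min (INF Q\<in>?M. ?f 0 R Q) (INF Q\<in>?M. ?f 1 (R + K) Q)"
  proof (rule cINF_inf_distrib[of ?M "?f 0 R" "?f 1 (R + K)", symmetric, unfolded inf_min])
    show "?M \<noteq> {}" using admissible_tilted[OF assms(1,2)] by blast
  qed (fact bdd_below_objective[OF assms(1,2)])+
  also have "(INF Q\<in>?M. ?f 0 R Q) = (SUP \<rho>\<in>{0..<1}. E0 W (-\<rho>) 0 P + \<rho> * R)"
    using INF_objective_eq_SUP_E0[OF assms(1,2), of 0 R] assms(3) by simp
  also have "(INF Q\<in>?M. ?f 1 (R + K) Q) = (SUP \<rho>\<in>{0..<1}. E0 W (-\<rho>) (-\<rho>) P + \<rho> * (R + K))"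
    using INF_objective_eq_SUP_E0[OF assms(1,2), of 1 "R + K"] assms(3,4) by simp
  finally show ?thesis .
qed

end
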